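(* Let $N\ge1$ be an integer, $d>0$, $0\le s_1\le s_2\le\dots\le s_N$, and let $T$ satisfy $Nd\le T<(N+1)d$. Consider the problem $$\min_{x\in\mathbb{R}^{N+1}}\ \sum_{i=1}^{N+1}x_i^2$$ subject to - $\sum_{i=1}^k x_i\ge s_k+kd$ for $1\le k\le N$, - $x_i\ge 2d$ for $2\le i\le N$, - $x_{N+1}\ge d$, - $\sum_{i=1}^{N+1}x_i=T+Nd$. Assume this problem is feasible. Then its optimal solution $x^*$ is given by $$x_1^*=\max\left\{\frac{T-(N-2)d}{2},\ \max_{1\le k\le N}\{s_k-(k-2)d\}\right\},$$ $$x_i^*=2d\quad (2\le i\le N),$$ $$x_{N+1}^*=T-(N-2)d-x_1^*.$$
   Context: This optimization problem arises from minimizing the area under the age-of-information curve of a single energy harvesting transmitter. The $s_k$ are energy arrival times, $d$ is the fixed service (transmission) time, and $T$ is the session length. The variables are $x_1=t_1+d$, $x_i=t_i-t_{i-1}+d$ for $2\le i\le N$, and $x_{N+1}=T-t_N$, where $t_i$ are the update transmission times. *)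

theory Defs
  imports Complex_Main
begin

text \<open>Vectors x in R^(N+1) are represented as functions nat => real; only the
  coordinates x 1, ..., x (N+1) are relevant.\<close>

definition aoi_obj :: "nat \<Rightarrow> (nat \<Rightarrow> real) \<Rightarrow> real" where
  "aoi_obj N x = (\<Sum>i=1..N+1. (x i)^2)"

definition aoi_feasible ::
  "nat \<Rightarrow> real \<Rightarrow> real \<Rightarrow> (nat \<Rightarrow> real) \<Rightarrow> (nat \<Rightarrow> real) \<Rightarrow> bool" where
  "aoi_feasible N d T s x \<longleftrightarrow>
     (\<forall>k\<in>{1..N}. (\<Sum>i=1..k. x i) \<ge> s k + real k * d) \<and>
     (\<forall>i\<in>{2..N}. x i \<ge> 2 * d) \<and>
     x (N+1) \<ge> d \<and>
     (\<Sum>i=1..N+1. x i) = T + real N * d"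

definition aoi_optimal ::
  "nat \<Rightarrow> real \<Rightarrow> real \<Rightarrow> (nat \<Rightarrow> real) \<Rightarrow> (nat \<Rightarrow> real) \<Rightarrow> bool" where
  "aoi_optimal N d T s x \<longleftrightarrow>
     aoi_feasible N d T s x \<and> (\<forall>y. aoi_feasible N d T s y \<longrightarrow> aoi_obj N x \<le> aoi_obj N y)"

end

theory Submission
  imports Defs
begin

text \<open>Write \<open>M = T - (N - 2) d\<close> (\<open>aoi_budget\<close>) and, for a feasible \<open>y\<close>, let \<open>E\<close>
  (\<open>aoi_excess\<close>) be the total excess of \<open>y 2, \<dots>, y N\<close> over \<open>2 d\<close>. The constraints say exactly that \<open>E \<ge> 0\<close>,
  \<open>y 1 + E + y (N+1) = M\<close>, \<open>y (N+1) \<ge> d\<close> and \<open>y 1 + E \<ge> s k - (k - 2) d\<close> for all \<open>k\<close>,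
  so the problem is essentially two-dimensional. The candidate \<open>x\<close> satisfies the
  first-order condition \<open>\<langle>x, y - x\<rangle> \<ge> 0\<close> for every feasible \<open>y\<close>, because
  \<open>\<langle>x, y - x\<rangle> = (y 1 - x 1)(2 x 1 - M) + E (2 d - M + x 1)\<close>: either \<open>2 x 1 = M\<close>, or
  \<open>x 1\<close> is the largest lower bound and \<open>y 1 - x 1 \<ge> -E\<close>; in both cases the sum is at
  least \<open>E (2 d - x 1) \<ge> 0\<close>, where \<open>x 1 \<le> 2 d\<close> comes from \<open>T < (N + 1) d\<close>.
  Then \<open>\<parallel>y\<parallel>\<^sup>2 \<ge> \<parallel>x\<parallel>\<^sup>2 + \<parallel>y - x\<parallel>\<^sup>2\<close> gives optimality and uniqueness.\<close>

lemma sum_squares_le_of_variational: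
  fixes x y :: "'a \<Rightarrow> real"
  assumes "0 \<le> (\<Sum>i\<in>A. x i * (y i - x i))"
  shows "(\<Sum>i\<in>A. (x i)^2) + (\<Sum>i\<in>A. (y i - x i)^2) \<le> (\<Sum>i\<in>A. (y i)^2)"
proof -
  have "(\<Sum>i\<in>A. (y i)^2) = (\<Sum>i\<in>A. (x i)^2 + 2 * (x i * (y i - x i)) + (y i - x i)^2)"
    by (rule sum.cong) (auto simp: power2_eq_square algebra_simps)
  also have "\<dots> = (\<Sum>i\<in>A. (x i)^2) + 2 * (\<Sum>i\<in>A. x i * (y i - x i)) + (\<Sum>i\<in>A. (y i - x i)^2)"
    by (simp add: sum.distrib sum_distrib_left)
  finally show ?thesis using assms by linarith
qed

lemma aoi_optimal_unique_of_variational: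
  assumes feasible: "aoi_feasible N d T s x"
    and variational: "\<And>y. aoi_feasible N d T s y \<Longrightarrow> 0 \<le> (\<Sum>i=1..N+1. x i * (y i - x i))"
  shows "aoi_optimal N d T s x \<and>
         (\<forall>y. aoi_optimal N d T s y \<longrightarrow> (\<forall>i\<in>{1..N+1}. y i = x i))"
proof -
  have bound: "aoi_obj N x + (\<Sum>i=1..N+1. (y i - x i)^2) \<le> aoi_obj N y"
    if "aoi_feasible N d T s y" for y
    unfolding aoi_obj_def by (rule sum_squares_le_of_variational) (rule variational[OF that])
  have dist_nonneg: "0 \<le> (\<Sum>i=1..N+1. (y i - x i)^2)" for y :: "nat \<Rightarrow> real"
    by (simp add: sum_nonneg)
  have "y i = x i" if "aoi_optimal N d T s y" and i: "i \<in> {1..N+1}" for y i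
  proof -
    from that feasible have "aoi_feasible N d T s y" "aoi_obj N y \<le> aoi_obj N x"
      unfolding aoi_optimal_def by auto
    with bound have "(\<Sum>i=1..N+1. (y i - x i)^2) = 0"
      using dist_nonneg[of y] by fastforce
    then have "(y i - x i)^2 = 0"
      using sum_nonneg_eq_0_iff[of "{1..N+1}" "\<lambda>i. (y i - x i)^2"] i by simp
    then show ?thesis by simp
  qed
  moreover have "aoi_obj N x \<le> aoi_obj N y" if "aoi_feasible N d T s y" for y
    using bound[OF that] dist_nonneg[of y] by linarith
  then have "aoi_optimal N d T s x"
    unfolding aoi_optimal_def using feasible by blast
  ultimately show ?thesis by blast
qed

definition aoi_budget :: "nat \<Rightarrow> real \<Rightarrow> real \<Rightarrow> real" where
  "aoi_budget N d T = T - (real N - 2) * d"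

definition aoi_demand :: "nat \<Rightarrow> real \<Rightarrow> (nat \<Rightarrow> real) \<Rightarrow> real" where
  "aoi_demand N d s = Max ((\<lambda>k. s k - (real k - 2) * d) ` {1..N})"

definition aoi_excess :: "nat \<Rightarrow> real \<Rightarrow> (nat \<Rightarrow> real) \<Rightarrow> real" where
  "aoi_excess N d y = (\<Sum>i=2..N. y i - 2 * d)"

lemma sum_first_middle_last:
  fixes f :: "nat \<Rightarrow> real"
  assumes "N \<ge> 1"
  shows "(\<Sum>i=1..N+1. f i) = f 1 + (\<Sum>i=2..N. f i) + f (N+1)"
  using assms sum.atLeast_Suc_atMost[of 1 N f] by (simp add: numeral_2_eq_2)

lemma sum_prefix_eq_excess:
  fixes y :: "nat \<Rightarrow> real"
  assumes "1 \<le> k"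
  shows "(\<Sum>i=1..k. y i) = y 1 + (\<Sum>i=2..k. y i - 2 * d) + (real k - 1) * 2 * d"
  using assms sum.atLeast_Suc_atMost[of 1 k y]
  by (simp add: numeral_2_eq_2 sum_subtractf of_nat_diff algebra_simps)

lemma aoi_excess_nonneg:
  assumes "aoi_feasible N d T s y"
  shows "0 \<le> aoi_excess N d y"
  using assms unfolding aoi_feasible_def aoi_excess_def by (auto intro: sum_nonneg)

lemma aoi_feasible_total:
  assumes "aoi_feasible N d T s y" and "N \<ge> 1"
  shows "y 1 + aoi_excess N d y + y (N+1) = aoi_budget N d T"
proof -
  have "(\<Sum>i=1..N+1. y i) = T + real N * d"
    using assms(1) unfolding aoi_feasible_def by simp
  then show ?thesis
    using sum_prefix_eq_excess[of N y d] assms(2)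
    unfolding aoi_excess_def aoi_budget_def by (simp add: algebra_simps)
qed

lemma aoi_demand_le_excess:
  assumes "aoi_feasible N d T s y" and "N \<ge> 1"
  shows "aoi_demand N d s \<le> y 1 + aoi_excess N d y"
proof -
  have "s k - (real k - 2) * d \<le> y 1 + aoi_excess N d y" if k: "k \<in> {1..N}" for k
  proof -
    have "s k + real k * d \<le> (\<Sum>i=1..k. y i)"
      using assms(1) k unfolding aoi_feasible_def by simp
    moreover have "(\<Sum>i=2..k. y i - 2 * d) \<le> aoi_excess N d y"
      unfolding aoi_excess_def using assms(1) k
      by (intro sum_mono2) (auto simp: aoi_feasible_def)
    ultimately show ?thesis
      using sum_prefix_eq_excess[of k y d] k by (simp add: algebra_simps)
  qed
  then show ?thesis
    unfolding aoi_demand_def using assms(2) by (simp add: Max_le_iff)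
qed

lemma aoi_demand_le_budget:
  assumes "aoi_feasible N d T s y" and "N \<ge> 1"
  shows "aoi_demand N d s \<le> aoi_budget N d T - d"
  using aoi_demand_le_excess[OF assms] aoi_feasible_total[OF assms] assms(1)
  unfolding aoi_feasible_def by linarith

context
  fixes N :: nat and d T :: real and s x :: "nat \<Rightarrow> real"
  assumes N: "N \<ge> 1"
    and middle: "\<And>i. 2 \<le> i \<Longrightarrow> i \<le> N \<Longrightarrow> x i = 2 * d"
    and last: "x (N+1) = aoi_budget N d T - x 1"
begin

lemma aoi_candidate_feasible:
  assumes "aoi_demand N d s \<le> x 1" and "x 1 \<le> aoi_budget N d T - d"
  shows "aoi_feasible N d T s x"
  unfolding aoi_feasible_def
proof (intro conjI ballI)
  fix k assume k: "k \<in> {1..N}"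
  have "s k - (real k - 2) * d \<le> aoi_demand N d s"
    unfolding aoi_demand_def using k by (intro Max_ge) auto
  moreover have "(\<Sum>i=2..k. x i - 2 * d) = 0"
    using k by (simp add: middle)
  ultimately show "s k + real k * d \<le> (\<Sum>i=1..k. x i)"
    using sum_prefix_eq_excess[of k x d] k assms(1) by (simp add: algebra_simps)
next
  show "d \<le> x (N+1)" using last assms(2) by simp
  have "(\<Sum>i=2..N. x i) = (real N - 1) * 2 * d"
    using N by (simp add: middle of_nat_diff)
  then show "(\<Sum>i=1..N+1. x i) = T + real N * d"
    using sum_first_middle_last[OF N, of x] last by (simp add: aoi_budget_def algebra_simps)
qed (simp add: middle)

lemma aoi_candidate_variational:
  assumes first: "x 1 = max (aoi_budget N d T / 2) (aoi_demand N d s)"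
    and small: "x 1 \<le> 2 * d"
    and feasible: "aoi_feasible N d T s y"
  shows "0 \<le> (\<Sum>i=1..N+1. x i * (y i - x i))"
proof -
  define M where "M = aoi_budget N d T"
  define E where "E = aoi_excess N d y"
  have "E \<ge> 0" unfolding E_def using aoi_excess_nonneg[OF feasible] .
  have y_last: "y (N+1) = M - y 1 - E"
    using aoi_feasible_total[OF feasible N] unfolding M_def E_def by linarith
  have "(\<Sum>i=2..N. x i * (y i - x i)) = 2 * d * E"
    unfolding E_def aoi_excess_def by (simp add: middle sum_distrib_left)
  then have "(\<Sum>i=1..N+1. x i * (y i - x i))
      = x 1 * (y 1 - x 1) + 2 * d * E + x (N+1) * (y (N+1) - x (N+1))"
    using sum_first_middle_last[OF N, of "\<lambda>i. x i * (y i - x i)"] by linarith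
  also have "\<dots> = (y 1 - x 1) * (2 * x 1 - M) + E * (2 * d - M + x 1)"
    unfolding y_last last M_def[symmetric] by algebra
  also have "\<dots> \<ge> - E * (2 * x 1 - M) + E * (2 * d - M + x 1)"
  proof (cases "2 * x 1 = M")
    case False
    then have "x 1 = aoi_demand N d s" and factor: "2 * x 1 - M \<ge> 0"
      using first unfolding M_def by auto
    then have "- E \<le> y 1 - x 1"
      using aoi_demand_le_excess[OF feasible N] unfolding E_def by linarith
    from mult_right_mono[OF this factor]
    have "- E * (2 * x 1 - M) \<le> (y 1 - x 1) * (2 * x 1 - M)" .
    then show ?thesis by linarith
  qed simp
  also have "- E * (2 * x 1 - M) + E * (2 * d - M + x 1) = E * (2 * d - x 1)"
    by algebra
  finally show ?thesis
    using mult_nonneg_nonneg[OF \<open>E \<ge> 0\<close>, of "2 * d - x 1"] small by linarith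
qed

end

theorem theorem1:
  fixes N :: nat and d T :: real and s :: "nat \<Rightarrow> real" and xs :: "nat \<Rightarrow> real"
  assumes "N \<ge> 1" and "d > 0"
    and "0 \<le> s 1"
    and "\<And>i j. 1 \<le> i \<Longrightarrow> i \<le> j \<Longrightarrow> j \<le> N \<Longrightarrow> s i \<le> s j"
    and "real N * d \<le> T" and "T < (real N + 1) * d"
    and "\<exists>x. aoi_feasible N d T s x"
    and "xs 1 = max ((T - (real N - 2) * d) / 2)
                     (Max ((\<lambda>k. s k - (real k - 2) * d) ` {1..N}))"
    and "\<And>i. 2 \<le> i \<Longrightarrow> i \<le> N \<Longrightarrow> xs i = 2 * d"
    and "xs (N+1) = T - (real N - 2) * d - xs 1"
  shows "aoi_optimal N d T s xs \<and>
         (\<forall>y. aoi_optimal N d T s y \<longrightarrow> (\<forall>i\<in>{1..N+1}. y i = xs i))"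
proof -
  note N = assms(1) and middle = assms(9)
  have first: "xs 1 = max (aoi_budget N d T / 2) (aoi_demand N d s)"
    and last: "xs (N+1) = aoi_budget N d T - xs 1"
    using assms(8,10) unfolding aoi_budget_def aoi_demand_def by simp_all
  have budget: "2 * d \<le> aoi_budget N d T" "aoi_budget N d T < 3 * d"
    using assms(5,6) unfolding aoi_budget_def by (auto simp: algebra_simps)
  obtain y where "aoi_feasible N d T s y" using assms(7) by blast
  then have "aoi_demand N d s \<le> aoi_budget N d T - d"
    using aoi_demand_le_budget N by blast
  then have "xs 1 \<le> aoi_budget N d T - d" and small: "xs 1 \<le> 2 * d"
    using first budget by auto
  moreover have "aoi_demand N d s \<le> xs 1"
    using first by simp
  ultimately have "aoi_feasible N d T s xs"
    using aoi_candidate_feasible[OF N middle last] by blast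
  then show ?thesis
    by (rule aoi_optimal_unique_of_variational)
      (rule aoi_candidate_variational[OF N middle last first small])
qed

end
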